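(* For a greedy policy and an alternating policy applied to the same label sequences, with match counts $M_{\mathbf G}(n)$ and $M_{\mathbf A}(n)$, let $T_n:=\min\bigl(n,\inf\{k\ge1: S_{\mathbf G}(k+1)=\lceil n/2\rceil+1\ \text{or}\ R_{\mathbf G}(k+1)=\lceil n/2\rceil+1\}\bigr)$, $A_n:=\{R_{\mathbf G}(T_n)=\lceil n/2\rceil\}$, and define $G_n$ by $$2G_n:=\begin{cases}(\Gamma_{\mathbf R}[R_{\mathbf G}(n)]-\Gamma_{\mathbf R}[\lfloor n/2\rfloor])-(\Gamma_{\mathbf S}[\lfloor n/2\rfloor]-\Gamma_{\mathbf S}[S_{\mathbf G}(n)]) & \text{on } A_n,\\ (\Gamma_{\mathbf S}[S_{\mathbf G}(n)]-\Gamma_{\mathbf S}[\lfloor n/2\rfloor])-(\Gamma_{\mathbf R}[\lfloor n/2\rfloor]-\Gamma_{\mathbf R}[R_{\mathbf G}(n)]) & \text{on } A_n^c.\end{cases}$$ Then $$\frac{M_{\mathbf G}(n)-M_{\mathbf A}(n)}{n^{5/4}}-\frac{G_n}{n^{1/4}}\xrightarrow{a.s.}0\quad(n\to\infty).$$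
   Context: Let $(r_i)_{i\ge1}$, $(s_i)_{i\ge1}$ be probability vectors on the positive integers with $\mu:=\sum_i r_is_i>0$. Let $\{L_{\mathbf R}(n)\}_{n\ge1}$, $\{L_{\mathbf S}(n)\}_{n\ge1}$ be independent i.i.d. sequences with $\Pr(L_{\mathbf R}(1)=i)=r_i$, $\Pr(L_{\mathbf S}(1)=i)=s_i$. For $m\ge0$ let $\tilde N_{\mathbf R}(m)$ be the vector with entries $N_{\mathbf R}(m,i)=\sum_{j=1}^m\mathbf 1\{L_{\mathbf R}(j)=i\}$, and $\tilde N_{\mathbf S}(m)$ analogously. Put $X_{\mathbf R}(n)=s_{L_{\mathbf R}(n)}$, $X_{\mathbf S}(n)=r_{L_{\mathbf S}(n)}$ (common mean $\mu$, variances $\sigma_{\mathbf R}^2,\sigma_{\mathbf S}^2$; standing assumption $\sigma_{\mathbf R}+\sigma_{\mathbf S}>0$), $\Gamma_{\mathbf R}[m]=\sum_{j=1}^mX_{\mathbf R}(j)$, $\Gamma_{\mathbf S}[m]=\sum_{j=1}^mX_{\mathbf S}(j)$. A reading policy is a $\{0,1\}$-valued process $C(n)$ ($C(n)=1$ iff the $n$-th record is read from $\mathbf R$), $R(n)=\sum_{j\le n}C(j)$, $S(n)=n-R(n)$, with $C(n)$ being $\mathcal F_{n-1}$-measurable where $\mathcal F_n=\mathcal F_0\vee\sigma(L_{\mathbf R}(1),\dots,L_{\mathbf R}(R(n));L_{\mathbf S}(1),\dots,L_{\mathbf S}(S(n)))$ and $\mathcal F_0$ (randomization, for both policies) is independent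 of the labels. Matches: $M(n)=\tilde N_{\mathbf R}(R(n))\cdot\tilde N_{\mathbf S}(S(n))$. An alternating policy is $\mathcal F_0$-measurable with $R(2n)=n$ for all $n$. A greedy policy satisfies, for $n\ge1$, $C(n+1)=1$ if $\Gamma_{\mathbf S}[S(n)]>\Gamma_{\mathbf R}[R(n)]$ and $C(n+1)=0$ if $\Gamma_{\mathbf S}[S(n)]<\Gamma_{\mathbf R}[R(n)]$ (ties arbitrary); $R_{\mathbf G},S_{\mathbf G}$ denote its $R,S$. *)

theory Defs
  imports "HOL-Probability.Probability"
begin

text \<open>Reading policies are modelled as \<open>C :: nat \<Rightarrow> 'a \<Rightarrow> bool\<close>,
  \<open>C n \<omega>\<close> true iff the n-th record (n \<ge> 1) is read from R.\<close>

definition Rcnt :: "(nat \<Rightarrow> 'a \<Rightarrow> bool) \<Rightarrow> nat \<Rightarrow> 'a \<Rightarrow> nat" where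
  "Rcnt C n \<omega> = card {j \<in> {1..n}. C j \<omega>}"

definition Scnt :: "(nat \<Rightarrow> 'a \<Rightarrow> bool) \<Rightarrow> nat \<Rightarrow> 'a \<Rightarrow> nat" where
  "Scnt C n \<omega> = n - Rcnt C n \<omega>"

definition Ncnt :: "(nat \<Rightarrow> 'a \<Rightarrow> nat) \<Rightarrow> nat \<Rightarrow> nat \<Rightarrow> 'a \<Rightarrow> nat" where
  "Ncnt L m i \<omega> = card {j \<in> {1..m}. L j \<omega> = i}"

definition matches :: "(nat \<Rightarrow> 'a \<Rightarrow> nat) \<Rightarrow> (nat \<Rightarrow> 'a \<Rightarrow> nat) \<Rightarrow> (nat \<Rightarrow> 'a \<Rightarrow> bool) \<Rightarrow> nat \<Rightarrow> 'a \<Rightarrow> real" where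
  "matches LR LS C n \<omega> =
     (\<Sum>\<^sub>\<infinity>i\<in>{1..}. real (Ncnt LR (Rcnt C n \<omega>) i \<omega>) * real (Ncnt LS (Scnt C n \<omega>) i \<omega>))"

text \<open>Gam w L m = sum_{j=1}^m w(L j); Gamma_R = Gam s LR, Gamma_S = Gam r LS.\<close>
definition Gam :: "(nat \<Rightarrow> real) \<Rightarrow> (nat \<Rightarrow> 'a \<Rightarrow> nat) \<Rightarrow> nat \<Rightarrow> 'a \<Rightarrow> real" where
  "Gam w L m \<omega> = (\<Sum>j=1..m. w (L j \<omega>))"

definition revealed :: "(nat \<Rightarrow> 'a \<Rightarrow> nat) \<Rightarrow> (nat \<Rightarrow> 'a \<Rightarrow> nat) \<Rightarrow> (nat \<Rightarrow> 'a \<Rightarrow> bool) \<Rightarrow> nat \<Rightarrow> 'a \<Rightarrow> nat list \<times> nat list" where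
  "revealed LR LS C n \<omega> =
     (map (\<lambda>j. LR j \<omega>) [1..<Rcnt C n \<omega> + 1], map (\<lambda>j. LS j \<omega>) [1..<Scnt C n \<omega> + 1])"

definition info_sa :: "'a measure \<Rightarrow> (nat \<Rightarrow> 'a \<Rightarrow> nat) \<Rightarrow> (nat \<Rightarrow> 'a \<Rightarrow> nat) \<Rightarrow> (nat \<Rightarrow> 'a \<Rightarrow> bool) \<Rightarrow> nat \<Rightarrow> 'a measure" where
  "info_sa F0 LR LS C n =
     sigma (space F0) (sets F0 \<union> {revealed LR LS C n -` A \<inter> space F0 | A. True})"

definition reading_policy :: "'a measure \<Rightarrow> (nat \<Rightarrow> 'a \<Rightarrow> nat) \<Rightarrow> (nat \<Rightarrow> 'a \<Rightarrow> nat) \<Rightarrow> (nat \<Rightarrow> 'a \<Rightarrow> bool) \<Rightarrow> bool" where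
  "reading_policy F0 LR LS C \<longleftrightarrow>
     (\<forall>n\<ge>1. C n \<in> measurable (info_sa F0 LR LS C (n - 1)) (count_space UNIV))"

definition alternating_policy :: "'a measure \<Rightarrow> (nat \<Rightarrow> 'a \<Rightarrow> nat) \<Rightarrow> (nat \<Rightarrow> 'a \<Rightarrow> nat) \<Rightarrow> (nat \<Rightarrow> 'a \<Rightarrow> bool) \<Rightarrow> bool" where
  "alternating_policy F0 LR LS C \<longleftrightarrow> reading_policy F0 LR LS C \<and>
     (\<forall>n\<ge>1. C n \<in> measurable F0 (count_space UNIV)) \<and>
     (\<forall>n. \<forall>\<omega>\<in>space F0. Rcnt C (2 * n) \<omega> = n)"

definition greedy_policy :: "(nat \<Rightarrow> real) \<Rightarrow> (nat \<Rightarrow> real) \<Rightarrow> 'a measure \<Rightarrow> (nat \<Rightarrow> 'a \<Rightarrow> nat) \<Rightarrow> (nat \<Rightarrow> 'a \<Rightarrow> nat) \<Rightarrow> (nat \<Rightarrow> 'a \<Rightarrow> bool) \<Rightarrow> bool" where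
  "greedy_policy r s F0 LR LS C \<longleftrightarrow> reading_policy F0 LR LS C \<and>
     (\<forall>n\<ge>1. \<forall>\<omega>\<in>space F0.
        (Gam r LS (Scnt C n \<omega>) \<omega> > Gam s LR (Rcnt C n \<omega>) \<omega> \<longrightarrow> C (Suc n) \<omega>) \<and>
        (Gam r LS (Scnt C n \<omega>) \<omega> < Gam s LR (Rcnt C n \<omega>) \<omega> \<longrightarrow> \<not> C (Suc n) \<omega>))"

definition Tstop :: "(nat \<Rightarrow> 'a \<Rightarrow> bool) \<Rightarrow> nat \<Rightarrow> 'a \<Rightarrow> nat" where
  "Tstop C n \<omega> =
     (let c = nat \<lceil>real n / 2\<rceil>;
          K = {k. k \<ge> 1 \<and> (Scnt C (k + 1) \<omega> = c + 1 \<or> Rcnt C (k + 1) \<omega> = c + 1)}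
      in if K = {} then n else min n (Inf K))"

definition Aevent :: "(nat \<Rightarrow> 'a \<Rightarrow> bool) \<Rightarrow> nat \<Rightarrow> 'a \<Rightarrow> bool" where
  "Aevent C n \<omega> \<longleftrightarrow> Rcnt C (Tstop C n \<omega>) \<omega> = nat \<lceil>real n / 2\<rceil>"

definition Gn :: "(nat \<Rightarrow> real) \<Rightarrow> (nat \<Rightarrow> real) \<Rightarrow> (nat \<Rightarrow> 'a \<Rightarrow> nat) \<Rightarrow> (nat \<Rightarrow> 'a \<Rightarrow> nat) \<Rightarrow> (nat \<Rightarrow> 'a \<Rightarrow> bool) \<Rightarrow> nat \<Rightarrow> 'a \<Rightarrow> real" where
  "Gn r s LR LS C n \<omega> =
     (let f = nat \<lfloor>real n / 2\<rfloor>; R = Rcnt C n \<omega>; S = Scnt C n \<omega> in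
      (if Aevent C n \<omega>
       then (Gam s LR R \<omega> - Gam s LR f \<omega>) - (Gam r LS f \<omega> - Gam r LS S \<omega>)
       else (Gam r LS S \<omega> - Gam r LS f \<omega>) - (Gam s LR f \<omega> - Gam s LR R \<omega>)) / 2)"

end

theory Submission
  imports Defs "HOL-Real_Asymp.Real_Asymp"
begin

text \<open>By Hoeffding's inequality and Borel--Cantelli, almost every sample path satisfies
  \<open>\<Gamma>[m] = \<mu> m + O(m\<^sup>3\<^sup>/\<^sup>5)\<close> for both streams and \<open>N(m, i) = m r\<^sub>i + O(m\<^sup>3\<^sup>/\<^sup>5)\<close>
  uniformly in the label \<open>i\<close> (the union bound runs over a grid of \<open>O(m)\<close> quantiles only).
  The greedy policy keeps \<open>\<bar>\<Gamma>\<^sub>R[R(n)] - \<Gamma>\<^sub>S[S(n)]\<bar> \<le> 1\<close>, hence \<open>R(n) - n/2 = O(n\<^sup>3\<^sup>/\<^sup>5)\<close>.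
  Writing \<open>M(n)\<close> as the sum of \<open>N\<^sub>S(S(n), L\<^sub>R(j))\<close> over \<open>j \<le> R(n)\<close> and expanding it to first order around
  \<open>(\<lfloor>n/2\<rfloor>, \<lfloor>n/2\<rfloor>)\<close>, where the alternating policy stays, gives
  \<open>M\<^sub>G(n) - M\<^sub>A(n) = n G\<^sub>n + O(n\<^sup>6\<^sup>/\<^sup>5)\<close>, and \<open>n\<^sup>6\<^sup>/\<^sup>5 = o(n\<^sup>5\<^sup>/\<^sup>4)\<close>.\<close>

section \<open>Independence and concentration\<close>

lemma (in prob_space) indep_sets_reindex:
  assumes inj: "inj_on f J" and indep: "indep_sets F (f ` J)"
  shows "indep_sets (\<lambda>j. F (f j)) J"
  unfolding indep_sets_def
proof (intro conjI ballI allI impI)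
  show "F (f j) \<subseteq> events" if "j \<in> J" for j
    using indep that by (auto simp: indep_sets_def)
next
  fix K A assume K: "K \<subseteq> J" "K \<noteq> {}" "finite K" and A: "A \<in> (\<Pi> j\<in>K. F (f j))"
  have inj_K: "inj_on f K" using inj K(1) by (rule inj_on_subset)
  define B where "B i = A (the_inv_into K f i)" for i
  have B: "B (f j) = A j" if "j \<in> K" for j
    unfolding B_def using the_inv_into_f_f[OF inj_K that] by simp
  have "B \<in> (\<Pi> i\<in>f ` K. F i)" using A B by auto
  then have "prob (\<Inter>i\<in>f ` K. B i) = (\<Prod>i\<in>f ` K. prob (B i))"
    using indep K unfolding indep_sets_def by (auto dest!: spec[of _ "f ` K"])
  then show "prob (\<Inter>j\<in>K. A j) = (\<Prod>j\<in>K. prob (A j))"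
    by (simp add: prod.reindex[OF inj_K] B cong: INF_cong)
qed

lemma (in prob_space) indep_vars_reindex:
  assumes "inj_on f J" and "indep_vars M' X (f ` J)"
  shows "indep_vars (\<lambda>j. M' (f j)) (\<lambda>j. X (f j)) J"
  using assms indep_sets_reindex[OF assms(1), where F="\<lambda>i. {X i -` A \<inter> space M | A. A \<in> sets (M' i)}"]
  unfolding indep_vars_def2 by auto

lemma (in prob_space) expectation_nat_valued:
  fixes X :: "'a \<Rightarrow> nat" and p g :: "nat \<Rightarrow> real"
  assumes X: "X \<in> measurable M (count_space UNIV)"
    and distr: "\<And>i. prob {\<omega> \<in> space M. X \<omega> = i} = p i"
    and p_nonneg: "\<And>i. p i \<ge> 0" and p_sums: "p sums 1"
    and g_bounded: "\<And>i. \<bar>g i\<bar> \<le> B"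
  shows "expectation (\<lambda>\<omega>. g (X \<omega>)) = (\<Sum>i. p i * g i)"
proof -
  have distr_X: "distr M (count_space UNIV) X = density (count_space UNIV) p"
  proof (rule measure_eqI_countable[where A=UNIV])
    fix i :: nat
    have "emeasure (distr M (count_space UNIV) X) {i} = emeasure M {\<omega> \<in> space M. X \<omega> = i}"
      using X by (subst emeasure_distr) (auto intro!: arg_cong[where f="emeasure M"])
    also have "\<dots> = p i"
      using distr[of i] X by (subst emeasure_eq_measure) auto
    also have "\<dots> = emeasure (density (count_space UNIV) p) {i}"
      by (subst emeasure_density) (auto simp: nn_integral_count_space_finite)
    finally show "emeasure (distr M (count_space UNIV) X) {i} = emeasure (density (count_space UNIV) p) {i}" .
  qed auto
  have "summable (\<lambda>i. B * p i)"
    using p_sums by (intro summable_mult) (simp add: sums_iff)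
  then have "summable (\<lambda>i. norm (p i * g i))"
  proof (rule summable_comparison_test'[where N=0])
    fix i
    show "norm (norm (p i * g i)) \<le> B * p i"
      using mult_left_mono[OF g_bounded p_nonneg, of i] p_nonneg[of i] by (simp add: abs_mult mult.commute)
  qed
  then have "integrable (count_space UNIV) (\<lambda>i. p i * g i)"
    by (simp add: integrable_count_space_nat_iff)
  have "expectation (\<lambda>\<omega>. g (X \<omega>)) = integral\<^sup>L (distr M (count_space UNIV) X) g"
    using X by (subst integral_distr) auto
  also have "\<dots> = integral\<^sup>L (count_space UNIV) (\<lambda>i. p i * g i)"
    unfolding distr_X using p_nonneg by (subst integral_density) auto
  also have "\<dots> = (\<Sum>i. p i * g i)"
    by (rule integral_count_space_nat) fact
  finally show ?thesis .
qed

lemma (in prob_space) hoeffding_partial_sum: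
  fixes X :: "nat \<Rightarrow> 'a \<Rightarrow> nat" and g :: "nat \<Rightarrow> real"
  assumes indep: "indep_vars (\<lambda>_. count_space UNIV) X {1..}"
    and g_bounds: "\<And>i. 0 \<le> g i \<and> g i \<le> 1"
    and mean: "\<And>j. j \<ge> 1 \<Longrightarrow> expectation (\<lambda>\<omega>. g (X j \<omega>)) = c"
    and "m \<ge> 1" "t \<ge> 0"
  shows "prob {\<omega> \<in> space M. t \<le> \<bar>(\<Sum>j=1..m. g (X j \<omega>)) - real m * c\<bar>} \<le> 2 * exp (-2 * t\<^sup>2 / real m)"
proof -
  have "indep_vars (\<lambda>_. borel) (\<lambda>j \<omega>. g (X j \<omega>)) {1..m}"
    by (rule indep_vars_compose2[OF indep_vars_subset[OF indep]]) auto
  then interpret Hoeffding_ineq M "{1..m}" "\<lambda>j \<omega>. g (X j \<omega>)" "\<lambda>_. 0" "\<lambda>_. 1" "real m * c"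
  proof unfold_locales
    show "real m * c \<equiv> (\<Sum>j\<in>{1..m}. expectation (\<lambda>\<omega>. g (X j \<omega>)))"
      using mean by (intro eq_reflection) simp
  qed (use g_bounds in auto)
  show ?thesis using Hoeffding_ineq_abs_ge[OF \<open>t \<ge> 0\<close>] \<open>m \<ge> 1\<close> by simp
qed

lemma summable_hoeffding_union_bound:
  "summable (\<lambda>m::nat. (2 * real m + 2) * (2 * exp (-2 * (real m powr (3/5))\<^sup>2 / real m)))"
proof (rule summable_comparison_test_bigo)
  show "summable (\<lambda>m::nat. norm (1 / real m ^ 2))"
    using inverse_power_summable[of 2, where 'a=real] by (simp add: divide_inverse)
  show "(\<lambda>m::nat. (2 * real m + 2) * (2 * exp (-2 * (real m powr (3/5))\<^sup>2 / real m)))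
          \<in> O(\<lambda>m. 1 / real m ^ 2)"
    by real_asymp
qed

text \<open>Hoeffding bounds each of the at most \<open>2 m + 2\<close> deviation events at time \<open>m\<close> by
  \<open>2 exp (-2 m\<^sup>1\<^sup>/\<^sup>5)\<close>; these bounds are summable, so Borel--Cantelli applies.\<close>

lemma (in prob_space) AE_eventually_partial_sums_close:
  fixes X :: "nat \<Rightarrow> 'a \<Rightarrow> nat" and g :: "'k \<Rightarrow> nat \<Rightarrow> real"
    and c :: "'k \<Rightarrow> real" and K :: "nat \<Rightarrow> 'k set"
  assumes indep: "indep_vars (\<lambda>_. count_space UNIV) X {1..}"
    and g_bounds: "\<And>k i. 0 \<le> g k i \<and> g k i \<le> 1"
    and mean: "\<And>k j. j \<ge> 1 \<Longrightarrow> expectation (\<lambda>\<omega>. g k (X j \<omega>)) = c k"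
    and K_finite: "\<And>m. finite (K m)" and K_card: "\<And>m. card (K m) \<le> 2 * m + 2"
  shows "AE \<omega> in M. eventually (\<lambda>m. \<forall>k\<in>K m.
           \<bar>(\<Sum>j=1..m. g k (X j \<omega>)) - real m * c k\<bar> < real m powr (3/5)) sequentially"
proof -
  have X: "X j \<in> measurable M (count_space UNIV)" if "j \<ge> 1" for j
    using indep that unfolding indep_vars_def by auto
  define dev where "dev m k = {\<omega> \<in> space M.
    real m powr (3/5) \<le> \<bar>(\<Sum>j=1..m. g k (X j \<omega>)) - real m * c k\<bar>}" for m k
  define bad where "bad m = (if m = 0 then {} else \<Union>k\<in>K m. dev m k)" for m
  have dev_events: "dev m k \<in> events" for m k
  proof -
    have "(\<lambda>\<omega>. \<Sum>j=1..m. g k (X j \<omega>)) \<in> borel_measurable M"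
      by (intro borel_measurable_sum measurable_compose[OF X]) auto
    then show ?thesis unfolding dev_def by measurable
  qed
  have bad_events: "bad m \<in> events" for m
    unfolding bad_def using dev_events K_finite by auto
  have "prob (bad m) \<le> (2 * real m + 2) * (2 * exp (-2 * (real m powr (3/5))\<^sup>2 / real m))" for m
  proof (cases "m = 0")
    case False
    have "prob (bad m) \<le> (\<Sum>k\<in>K m. prob (dev m k))"
      unfolding bad_def using False dev_events K_finite by (auto intro!: finite_measure_subadditive_finite)
    also have "\<dots> \<le> (\<Sum>k\<in>K m. 2 * exp (-2 * (real m powr (3/5))\<^sup>2 / real m))"
      unfolding dev_def
      by (intro sum_mono hoeffding_partial_sum[OF indep]) (use g_bounds mean False in auto)
    also have "\<dots> = real (card (K m)) * (2 * exp (-2 * (real m powr (3/5))\<^sup>2 / real m))"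
      by simp
    also have "\<dots> \<le> (2 * real m + 2) * (2 * exp (-2 * (real m powr (3/5))\<^sup>2 / real m))"
      using K_card[of m] by (intro mult_right_mono) (auto simp del: of_nat_add simp add: of_nat_le_iff[symmetric])
    finally show ?thesis .
  qed (simp add: bad_def)
  then have "summable (\<lambda>m. prob (bad m))"
    by (intro summable_comparison_test'[OF summable_hoeffding_union_bound, where N=0]) auto
  then have "AE \<omega> in M. eventually (\<lambda>m. \<omega> \<in> space M - bad m) sequentially"
    by (intro borel_cantelli_AE1) (use bad_events in \<open>auto simp: emeasure_eq_measure\<close>)
  then show ?thesis
  proof (rule AE_mp[OF _ AE_I2], intro impI)
    fix \<omega> assume "\<omega> \<in> space M" and ev: "eventually (\<lambda>m. \<omega> \<in> space M - bad m) sequentially"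
    show "eventually (\<lambda>m. \<forall>k\<in>K m. \<bar>(\<Sum>j=1..m. g k (X j \<omega>)) - real m * c k\<bar> < real m powr (3/5)) sequentially"
      using eventually_conj[OF ev eventually_gt_at_top[of 0]]
      by eventually_elim (auto simp: bad_def dev_def not_le)
  qed
qed

section \<open>Empirical distribution functions\<close>

definition cum_mass :: "(nat \<Rightarrow> real) \<Rightarrow> nat \<Rightarrow> real" where
  "cum_mass p k = (\<Sum>i\<le>k. p i)"

lemma cum_mass_mono: "(\<And>i. p i \<ge> 0) \<Longrightarrow> k \<le> k' \<Longrightarrow> cum_mass p k \<le> cum_mass p k'"
  unfolding cum_mass_def by (intro sum_mono2) auto

lemma cum_mass_nonneg: "(\<And>i. p i \<ge> 0) \<Longrightarrow> cum_mass p k \<ge> 0"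
  unfolding cum_mass_def by (simp add: sum_nonneg)

lemma cum_mass_le_1:
  assumes "\<And>i. p i \<ge> 0" and "p sums 1"
  shows "cum_mass p k \<le> 1"
proof -
  have "cum_mass p k = (\<Sum>i<Suc k. p i)"
    unfolding cum_mass_def by (simp add: lessThan_Suc_atMost)
  also have "\<dots> \<le> suminf p"
    using assms by (intro sum_le_suminf) (auto simp: sums_iff)
  finally show ?thesis using assms by (simp add: sums_iff)
qed

lemma sums_one_bounds:
  fixes p :: "nat \<Rightarrow> real"
  assumes "\<And>i. p i \<ge> 0" and "p sums 1"
  shows "0 \<le> p i \<and> p i \<le> 1"
proof -
  have "p i \<le> cum_mass p i" unfolding cum_mass_def using assms(1) by (intro member_le_sum) auto
  then show ?thesis using cum_mass_le_1[OF assms, of i] assms(1)[of i] by simp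
qed

lemma cum_mass_diff: "p i = cum_mass p i - (if i = 0 then 0 else cum_mass p (i - 1))"
  by (cases i) (simp_all add: cum_mass_def)

definition quantile :: "(nat \<Rightarrow> real) \<Rightarrow> nat \<Rightarrow> nat \<Rightarrow> nat" where
  "quantile p m j = (LEAST k. real j / real m \<le> cum_mass p k)"

definition quantile_grid :: "(nat \<Rightarrow> real) \<Rightarrow> nat \<Rightarrow> nat set" where
  "quantile_grid p m = quantile p m ` {1..<m} \<union> (\<lambda>j. quantile p m j - 1) ` {1..<m}"

lemma finite_quantile_grid: "finite (quantile_grid p m)"
  by (simp add: quantile_grid_def)

lemma card_quantile_grid_le: "card (quantile_grid p m) \<le> 2 * m + 2"
proof -
  have "card (quantile_grid p m) \<le> card (quantile p m ` {1..<m}) + card ((\<lambda>j. quantile p m j - 1) ` {1..<m})"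
    unfolding quantile_grid_def by (rule card_Un_le)
  also have "\<dots> \<le> card {1..<m} + card {1..<m}"
    by (intro add_mono card_image_le) auto
  finally show ?thesis by simp
qed

lemma
  assumes p_nonneg: "\<And>i. p i \<ge> 0" and p_sums: "p sums 1" and "1 \<le> j" "j < m"
  shows le_cum_mass_quantile: "real j / real m \<le> cum_mass p (quantile p m j)"
    and cum_mass_less_before_quantile: "k < quantile p m j \<Longrightarrow> cum_mass p k < real j / real m"
proof -
  have "(\<lambda>n. \<Sum>i<n. p i) \<longlonglongrightarrow> 1" using p_sums by (simp add: sums_def)
  moreover have "real j / real m < 1" using assms by simp
  ultimately have "eventually (\<lambda>n. real j / real m < (\<Sum>i<n. p i)) sequentially"
    by (rule order_tendstoD)
  then obtain n where "real j / real m < (\<Sum>i<n. p i)"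
    by (auto simp: eventually_sequentially)
  also have "\<dots> \<le> cum_mass p n"
    unfolding cum_mass_def using p_nonneg by (intro sum_mono2) auto
  finally have "real j / real m \<le> cum_mass p n" by simp
  then show "real j / real m \<le> cum_mass p (quantile p m j)"
    unfolding quantile_def by (rule LeastI)
  show "cum_mass p k < real j / real m" if "k < quantile p m j"
    using not_less_Least[OF that[unfolded quantile_def]] by simp
qed

definition count_le :: "(nat \<Rightarrow> nat) \<Rightarrow> nat \<Rightarrow> nat \<Rightarrow> real" where
  "count_le y m k = (\<Sum>j=1..m. if y j \<le> k then 1 else 0)"

lemma count_le_mono: "k \<le> k' \<Longrightarrow> count_le y m k \<le> count_le y m k'"
  unfolding count_le_def by (intro sum_mono) auto

lemma count_le_bounds: "0 \<le> count_le y m k" "count_le y m k \<le> real m"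
proof -
  show "0 \<le> count_le y m k" unfolding count_le_def by (intro sum_nonneg) auto
  have "count_le y m k \<le> (\<Sum>j=1..m. 1)" unfolding count_le_def by (intro sum_mono) auto
  then show "count_le y m k \<le> real m" by simp
qed

text \<open>With \<open>x = m * cum_mass p k\<close>, the point \<open>k\<close> lies between the grid points
  \<open>quantile p m \<lfloor>x\<rfloor>\<close> and \<open>quantile p m (\<lfloor>x\<rfloor> + 1) - 1\<close>, where \<open>m * cum_mass p\<close> is within \<open>1\<close>
  of \<open>x\<close>; monotonicity of \<open>count_le y m\<close> transfers the grid bound to \<open>k\<close>.\<close>

lemma count_le_upper_from_grid:
  assumes p_nonneg: "\<And>i. p i \<ge> 0" and p_sums: "p sums 1" and "m \<ge> 1" "t \<ge> 0"
    and grid: "\<forall>k\<in>quantile_grid p m. \<bar>count_le y m k - real m * cum_mass p k\<bar> < t"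
  shows "count_le y m k \<le> real m * cum_mass p k + t + 1"
proof (cases "real m * cum_mass p k \<ge> real m - 1")
  case True
  then show ?thesis using count_le_bounds(2)[of y m k] \<open>t \<ge> 0\<close> by auto
next
  case False
  define j where "j = nat \<lfloor>real m * cum_mass p k\<rfloor> + 1"
  have "0 \<le> real m * cum_mass p k" using cum_mass_nonneg[of p k, OF p_nonneg] by simp
  then have j: "real j - 1 \<le> real m * cum_mass p k" "real m * cum_mass p k < real j" "1 \<le> j" "j < m"
    using False unfolding j_def by linarith+
  have k: "k < quantile p m j"
  proof (rule ccontr)
    assume "\<not> k < quantile p m j"
    then have "real m * cum_mass p (quantile p m j) \<le> real m * cum_mass p k"
      by (intro mult_left_mono cum_mass_mono p_nonneg) simp_all
    moreover have "real j \<le> real m * cum_mass p (quantile p m j)"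
      using le_cum_mass_quantile[OF p_nonneg p_sums j(3,4)] \<open>m \<ge> 1\<close> by (simp add: field_simps)
    ultimately show False using j(2) by linarith
  qed
  then have "count_le y m k \<le> count_le y m (quantile p m j - 1)"
    by (intro count_le_mono) simp
  also have "\<dots> < real m * cum_mass p (quantile p m j - 1) + t"
    using grid j(3,4) unfolding quantile_grid_def by force
  also have "real m * cum_mass p (quantile p m j - 1) < real j"
    using cum_mass_less_before_quantile[OF p_nonneg p_sums j(3,4), of "quantile p m j - 1"] k \<open>m \<ge> 1\<close>
    by (simp add: field_simps)
  finally show ?thesis using j by linarith
qed

lemma count_le_lower_from_grid:
  assumes p_nonneg: "\<And>i. p i \<ge> 0" and p_sums: "p sums 1" and "m \<ge> 1" "t \<ge> 0"
    and grid: "\<forall>k\<in>quantile_grid p m. \<bar>count_le y m k - real m * cum_mass p k\<bar> < t"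
  shows "real m * cum_mass p k \<le> count_le y m k + t + 1"
proof -
  define j where "j = min (nat \<lfloor>real m * cum_mass p k\<rfloor>) (m - 1)"
  have "0 \<le> real m * cum_mass p k" "real m * cum_mass p k \<le> real m"
    using cum_mass_nonneg[of p k, OF p_nonneg] cum_mass_le_1[of p k, OF p_nonneg p_sums]
    by (simp_all add: mult_left_le)
  then have j: "real j \<le> real m * cum_mass p k" "real m * cum_mass p k \<le> real j + 1" "j < m"
    using \<open>m \<ge> 1\<close> unfolding j_def by (auto simp: min_def) linarith+
  show ?thesis
  proof (cases "j = 0")
    case True
    then show ?thesis using j count_le_bounds(1)[of y m k] \<open>t \<ge> 0\<close> by auto
  next
    case False
    then have "1 \<le> j" by simp
    have "real j / real m \<le> cum_mass p k" using j \<open>m \<ge> 1\<close> by (simp add: field_simps)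
    then have k: "quantile p m j \<le> k"
      using cum_mass_less_before_quantile[OF p_nonneg p_sums \<open>1 \<le> j\<close> j(3)] by (meson not_less)
    have "real j \<le> real m * cum_mass p (quantile p m j)"
      using le_cum_mass_quantile[OF p_nonneg p_sums \<open>1 \<le> j\<close> j(3)] \<open>m \<ge> 1\<close> by (simp add: field_simps)
    also have "\<dots> < count_le y m (quantile p m j) + t"
      using grid \<open>1 \<le> j\<close> j(3) unfolding quantile_grid_def by force
    also have "count_le y m (quantile p m j) \<le> count_le y m k"
      using k by (rule count_le_mono)
    finally show ?thesis using j by linarith
  qed
qed

lemma count_le_deviation_from_grid:
  assumes "\<And>i. p i \<ge> 0" "p sums 1" "m \<ge> 1" "t \<ge> 0"
    and "\<forall>k\<in>quantile_grid p m. \<bar>count_le y m k - real m * cum_mass p k\<bar> < t"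
  shows "\<bar>count_le y m k - real m * cum_mass p k\<bar> \<le> t + 1"
proof -
  have "count_le y m k \<le> real m * cum_mass p k + t + 1" by (rule count_le_upper_from_grid[OF assms])
  moreover have "real m * cum_mass p k \<le> count_le y m k + t + 1" by (rule count_le_lower_from_grid[OF assms])
  ultimately show ?thesis by (simp only: abs_le_iff) linarith
qed

section \<open>Label counts and matches along a path\<close>

lemma abs_partial_sum_diff_le:
  fixes F :: "nat \<Rightarrow> real"
  assumes "\<And>j. \<bar>F j\<bar> \<le> E"
  shows "\<bar>(\<Sum>j=1..a'. F j) - (\<Sum>j=1..a. F j)\<bar> \<le> \<bar>real a' - real a\<bar> * E"
proof -
  have shift: "\<bar>(\<Sum>j=1..a + d. F j) - (\<Sum>j=1..a. F j)\<bar> \<le> real d * E" for a d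
  proof -
    have "\<bar>(\<Sum>j=1..a + d. F j) - (\<Sum>j=1..a. F j)\<bar> = \<bar>\<Sum>j=a + 1..a + d. F j\<bar>"
      by (subst sum.ub_add_nat[of 1 a F d]) simp_all
    also have "\<dots> \<le> (\<Sum>j=a + 1..a + d. \<bar>F j\<bar>)" by (rule sum_abs)
    also have "\<dots> \<le> (\<Sum>j=a + 1..a + d. E)" using assms by (intro sum_mono)
    finally show ?thesis by simp
  qed
  show ?thesis
  proof (cases "a \<le> a'")
    case True
    then obtain d where "a' = a + d" using le_Suc_ex by blast
    then show ?thesis using shift[of a d] by simp
  next
    case False
    then obtain d where "a = a' + d" using le_Suc_ex[of a' a] by auto
    then show ?thesis using shift[of a' d] by (simp add: abs_minus_commute)
  qed
qed

definition occurrences :: "(nat \<Rightarrow> nat) \<Rightarrow> nat \<Rightarrow> nat \<Rightarrow> real" where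
  "occurrences y b i = real (card {j \<in> {1..b}. y j = i})"

lemma occurrences_eq_sum: "occurrences y b i = (\<Sum>j=1..b. if y j = i then 1 else 0)"
proof -
  have "occurrences y b i = (\<Sum>j\<in>{j \<in> {1..b}. y j = i}. 1)" unfolding occurrences_def by simp
  also have "\<dots> = (\<Sum>j=1..b. if y j = i then 1 else 0)" by (subst sum.inter_filter) auto
  finally show ?thesis .
qed

lemma occurrences_bounds: "0 \<le> occurrences y b i" "occurrences y b i \<le> real b"
proof -
  show "0 \<le> occurrences y b i" by (simp add: occurrences_def)
  have "card {j \<in> {1..b}. y j = i} \<le> card {1..b}" by (intro card_mono) auto
  then show "occurrences y b i \<le> real b" by (simp add: occurrences_def)
qed

lemma occurrences_eq_count_le_diff:
  "occurrences y m i = count_le y m i - (if i = 0 then 0 else count_le y m (i - 1))"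
proof (cases i)
  case 0
  then show ?thesis unfolding occurrences_eq_sum count_le_def by simp
next
  case (Suc i')
  have "count_le y m i - count_le y m i' = (\<Sum>j=1..m. (if y j \<le> i then 1 else 0) - (if y j \<le> i' then 1 else 0))"
    unfolding count_le_def by (simp add: sum_subtractf)
  also have "\<dots> = occurrences y m i" unfolding occurrences_eq_sum Suc by (intro sum.cong refl) auto
  finally show ?thesis using Suc by simp
qed

lemma occurrences_deviation_le:
  assumes "\<And>k. \<bar>count_le y m k - real m * cum_mass p k\<bar> \<le> B"
  shows "\<bar>occurrences y m i - real m * p i\<bar> \<le> 2 * B"
proof -
  have "occurrences y m i - real m * p i = (count_le y m i - real m * cum_mass p i)
     - (if i = 0 then 0 else count_le y m (i - 1) - real m * cum_mass p (i - 1))"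
    by (subst occurrences_eq_count_le_diff, subst cum_mass_diff[of p i]) (simp add: algebra_simps)
  moreover have "B \<ge> 0" using assms[of 0] by linarith
  ultimately show ?thesis using assms[of i] assms[of "i - 1"] by (simp only: abs_le_iff split: if_split) linarith
qed

definition weight_sum :: "(nat \<Rightarrow> real) \<Rightarrow> (nat \<Rightarrow> nat) \<Rightarrow> nat \<Rightarrow> real" where
  "weight_sum w x a = (\<Sum>j=1..a. w (x j))"

lemma weight_sum_Suc: "weight_sum w x (Suc a) = weight_sum w x a + w (x (Suc a))"
  unfolding weight_sum_def by simp

lemma weight_sum_diff_le:
  "(\<And>i. \<bar>w i\<bar> \<le> 1) \<Longrightarrow> \<bar>weight_sum w x a' - weight_sum w x a\<bar> \<le> \<bar>real a' - real a\<bar>"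
  unfolding weight_sum_def using abs_partial_sum_diff_le[of "\<lambda>j. w (x j)" 1] by simp

lemma weight_sum_bounds:
  assumes "\<And>i. 0 \<le> w i \<and> w i \<le> 1"
  shows "0 \<le> weight_sum w x a" "weight_sum w x a \<le> real a"
proof -
  show "0 \<le> weight_sum w x a" unfolding weight_sum_def using assms by (intro sum_nonneg) auto
  have "weight_sum w x a \<le> (\<Sum>j=1..a. 1)" unfolding weight_sum_def using assms by (intro sum_mono) auto
  then show "weight_sum w x a \<le> real a" by simp
qed

definition pair_count :: "(nat \<Rightarrow> nat) \<Rightarrow> (nat \<Rightarrow> nat) \<Rightarrow> nat \<Rightarrow> nat \<Rightarrow> real" where
  "pair_count x y a b = (\<Sum>j=1..a. occurrences y b (x j))"

lemma pair_count_swap: "pair_count x y a b = pair_count y x b a"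
proof -
  have "pair_count x y a b = (\<Sum>j=1..a. \<Sum>l=1..b. if y l = x j then 1 else 0)"
    unfolding pair_count_def occurrences_eq_sum ..
  also have "\<dots> = (\<Sum>l=1..b. \<Sum>j=1..a. if y l = x j then 1 else 0)"
    by (rule sum.swap)
  also have "\<dots> = (\<Sum>l=1..b. \<Sum>j=1..a. if x j = y l then 1 else 0)"
    by (intro sum.cong refl) auto
  also have "\<dots> = pair_count y x b a"
    unfolding pair_count_def occurrences_eq_sum ..
  finally show ?thesis .
qed

lemma pair_count_diff_first_le:
  assumes "\<And>i. \<bar>occurrences y b i - real b * w i\<bar> \<le> E"
  shows "\<bar>pair_count x y a' b - pair_count x y a b - real b * (weight_sum w x a' - weight_sum w x a)\<bar>
           \<le> \<bar>real a' - real a\<bar> * E"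
proof -
  define D where "D j = occurrences y b (x j) - real b * w (x j)" for j
  have D_sum: "pair_count x y a b - real b * weight_sum w x a = (\<Sum>j=1..a. D j)" for a
    unfolding pair_count_def weight_sum_def D_def by (simp add: sum_subtractf sum_distrib_left)
  have "pair_count x y a' b - pair_count x y a b - real b * (weight_sum w x a' - weight_sum w x a)
      = (pair_count x y a' b - real b * weight_sum w x a') - (pair_count x y a b - real b * weight_sum w x a)"
    by (simp add: right_diff_distrib)
  also have "\<dots> = (\<Sum>j=1..a'. D j) - (\<Sum>j=1..a. D j)"
    by (simp only: D_sum)
  finally show ?thesis
    using abs_partial_sum_diff_le[of D E a' a] assms unfolding D_def by simp
qed

lemma pair_count_diff_second_le:
  assumes "\<And>i. \<bar>occurrences x a i - real a * w i\<bar> \<le> E"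
  shows "\<bar>pair_count x y a b' - pair_count x y a b - real a * (weight_sum w y b' - weight_sum w y b)\<bar>
           \<le> \<bar>real b' - real b\<bar> * E"
  using pair_count_diff_first_le[OF assms, of y b' b] by (simp only: pair_count_swap[of y x])

lemma pair_count_lipschitz:
  "\<bar>pair_count x y a' b' - pair_count x y a b\<bar> \<le> \<bar>real a' - real a\<bar> * real b + \<bar>real b' - real b\<bar> * real a'"
proof -
  have first: "\<bar>pair_count x y a' b - pair_count x y a b\<bar> \<le> \<bar>real a' - real a\<bar> * real b" for x y a' a b
    unfolding pair_count_def
    by (rule abs_partial_sum_diff_le) (use occurrences_bounds in \<open>simp add: abs_of_nonneg\<close>)
  have "\<bar>pair_count x y a' b' - pair_count x y a' b\<bar> \<le> \<bar>real b' - real b\<bar> * real a'"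
    using first[where x=y and y=x and a'=b' and a=b and b=a'] by (simp only: pair_count_swap[of y x])
  with first[where x=x and y=y and a'=a' and a=a and b=b] show ?thesis by (simp only: abs_le_iff) linarith
qed

lemma pair_count_near_half_le:
  assumes "a + b = n" "a \<in> {n div 2, n div 2 + 1}"
  shows "\<bar>pair_count x y a b - pair_count x y (n div 2) (n div 2)\<bar> \<le> 2 * real n"
proof -
  have "\<bar>real a - real (n div 2)\<bar> \<le> 1" "\<bar>real b - real (n div 2)\<bar> \<le> 1" "n div 2 \<le> n" "a \<le> n"
    using assms by auto
  then have "\<bar>real a - real (n div 2)\<bar> * real (n div 2) + \<bar>real b - real (n div 2)\<bar> * real a \<le> real n + real n"
    by (intro add_mono order.trans[OF mult_left_le_one_le]) auto
  with pair_count_lipschitz[of x y a b "n div 2" "n div 2"] show ?thesis by linarith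
qed

section \<open>Almost sure deviation bounds\<close>

lemma weighted_mass_bounds:
  fixes p w :: "nat \<Rightarrow> real"
  assumes p_nonneg: "\<And>i. p i \<ge> 0" and p_sums: "p sums 1" and w_bounds: "\<And>i. 0 \<le> w i \<and> w i \<le> 1"
  shows "0 \<le> (\<Sum>i. p i * w i)" "(\<Sum>i. p i * w i) \<le> 1"
proof -
  have p_w: "0 \<le> p i * w i" "p i * w i \<le> p i" for i
    using p_nonneg[of i] w_bounds[of i] by (auto simp: mult_left_le)
  have "summable p" using p_sums by (simp add: sums_iff)
  moreover from this have "summable (\<lambda>i. p i * w i)"
    by (rule summable_comparison_test'[where N=0]) (use p_w in auto)
  ultimately show "0 \<le> (\<Sum>i. p i * w i)" "(\<Sum>i. p i * w i) \<le> 1"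
    using suminf_nonneg[of "\<lambda>i. p i * w i"] suminf_le[of "\<lambda>i. p i * w i" p] p_w p_sums
    by (auto simp: sums_iff)
qed

lemma weight_sum_deviation_uniform:
  assumes w_bounds: "\<And>i. 0 \<le> w i \<and> w i \<le> 1" and "0 \<le> \<mu>" "\<mu> \<le> 1"
    and eventually: "\<forall>m\<ge>N. \<bar>weight_sum w x m - \<mu> * real m\<bar> < real m powr (3/5)"
  shows "\<bar>weight_sum w x m - \<mu> * real m\<bar> \<le> real N + real m powr (3/5)"
proof (cases "m \<ge> N")
  case True
  then show ?thesis using eventually by fastforce
next
  case False
  have "0 \<le> \<mu> * real m" "\<mu> * real m \<le> real m" using \<open>0 \<le> \<mu>\<close> \<open>\<mu> \<le> 1\<close> by (auto simp: mult_left_le_one_le)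
  moreover have "0 \<le> weight_sum w x m" "weight_sum w x m \<le> real m"
    using w_bounds by (rule weight_sum_bounds)+
  ultimately have "\<bar>weight_sum w x m - \<mu> * real m\<bar> \<le> real m"
    by (simp only: abs_le_iff) linarith
  moreover have "real m \<le> real N" using False by simp
  ultimately show ?thesis using powr_ge_zero[of "real m" "3/5"] by linarith
qed

lemma occurrences_deviation_uniform:
  assumes p_nonneg: "\<And>i. p i \<ge> 0" and p_sums: "p sums 1"
    and eventually: "\<forall>m\<ge>N. \<forall>k\<in>quantile_grid p m. \<bar>count_le y m k - real m * cum_mass p k\<bar> < real m powr (3/5)"
  shows "\<bar>occurrences y m i - real m * p i\<bar> \<le> 2 * real N + 2 + 2 * real m powr (3/5)"
proof -
  have "\<bar>count_le y m k - real m * cum_mass p k\<bar> \<le> real N + 1 + real m powr (3/5)" for k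
  proof (cases "m \<ge> N \<and> m \<ge> 1")
    case True
    then have "\<bar>count_le y m k - real m * cum_mass p k\<bar> \<le> real m powr (3/5) + 1"
      using eventually by (intro count_le_deviation_from_grid[OF p_nonneg p_sums]) auto
    then show ?thesis by simp
  next
    case False
    have "0 \<le> real m * cum_mass p k" "real m * cum_mass p k \<le> real m"
      using cum_mass_nonneg[OF p_nonneg] cum_mass_le_1[OF p_nonneg p_sums] by (auto simp: mult_left_le)
    with count_le_bounds[of y m k] have "\<bar>count_le y m k - real m * cum_mass p k\<bar> \<le> real m"
      by (simp only: abs_le_iff) linarith
    moreover have "real m \<le> real N + 1" using False by auto
    ultimately show ?thesis using powr_ge_zero[of "real m" "3/5"] by linarith
  qed
  then show ?thesis using occurrences_deviation_le by fastforce
qed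

context prob_space
begin

lemma AE_all_nonzero:
  fixes X :: "nat \<Rightarrow> 'a \<Rightarrow> nat"
  assumes X: "\<And>j. j \<ge> 1 \<Longrightarrow> X j \<in> measurable M (count_space UNIV)"
    and zero: "\<And>j. j \<ge> 1 \<Longrightarrow> prob {\<omega> \<in> space M. X j \<omega> = 0} = 0"
  shows "AE \<omega> in M. \<forall>j\<ge>1. X j \<omega> \<noteq> 0"
proof -
  have "AE \<omega> in M. X j \<omega> \<noteq> 0" if "j \<ge> 1" for j
  proof -
    have "{\<omega> \<in> space M. X j \<omega> = 0} \<in> null_sets M"
      using X[OF that] zero[OF that] by (auto simp: null_sets_def emeasure_eq_measure)
    from AE_not_in[OF this] AE_space show ?thesis by eventually_elim auto
  qed
  then show ?thesis by (subst AE_all_countable) auto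
qed

lemma AE_weight_sum_deviation:
  fixes X :: "nat \<Rightarrow> 'a \<Rightarrow> nat" and p w :: "nat \<Rightarrow> real"
  assumes indep: "indep_vars (\<lambda>_. count_space UNIV) X {1..}"
    and distr: "\<And>j i. j \<ge> 1 \<Longrightarrow> prob {\<omega> \<in> space M. X j \<omega> = i} = p i"
    and p_nonneg: "\<And>i. p i \<ge> 0" and p_sums: "p sums 1"
    and w_bounds: "\<And>i. 0 \<le> w i \<and> w i \<le> 1"
  shows "AE \<omega> in M. \<exists>C\<ge>0. \<forall>m.
           \<bar>weight_sum w (\<lambda>j. X j \<omega>) m - (\<Sum>i. p i * w i) * real m\<bar> \<le> C + 2 * real m powr (3/5)"
proof -
  define \<mu> where "\<mu> = (\<Sum>i. p i * w i)"
  have \<mu>: "0 \<le> \<mu>" "\<mu> \<le> 1" unfolding \<mu>_def by (rule weighted_mass_bounds[OF p_nonneg p_sums w_bounds])+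
  have X: "X j \<in> measurable M (count_space UNIV)" if "j \<ge> 1" for j
    using indep that unfolding indep_vars_def by auto
  have "expectation (\<lambda>\<omega>. w (X j \<omega>)) = \<mu>" if "j \<ge> 1" for j
    unfolding \<mu>_def using w_bounds
    by (intro expectation_nat_valued[OF X[OF that] distr[OF that] p_nonneg p_sums, of w 1]) auto
  then have "AE \<omega> in M. eventually (\<lambda>m. \<forall>k\<in>{0::nat}.
      \<bar>(\<Sum>j=1..m. w (X j \<omega>)) - real m * \<mu>\<bar> < real m powr (3/5)) sequentially"
    using w_bounds by (intro AE_eventually_partial_sums_close[OF indep]) auto
  then show ?thesis
  proof (rule eventually_mono)
    fix \<omega>
    assume "eventually (\<lambda>m. \<forall>k\<in>{0::nat}.
      \<bar>(\<Sum>j=1..m. w (X j \<omega>)) - real m * \<mu>\<bar> < real m powr (3/5)) sequentially"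
    then obtain N where N: "\<forall>m\<ge>N. \<bar>weight_sum w (\<lambda>j. X j \<omega>) m - \<mu> * real m\<bar> < real m powr (3/5)"
      by (auto simp: eventually_sequentially weight_sum_def mult.commute)
    have "\<bar>weight_sum w (\<lambda>j. X j \<omega>) m - \<mu> * real m\<bar> \<le> real N + 2 * real m powr (3/5)" for m
      using weight_sum_deviation_uniform[OF w_bounds \<mu> N, of m] powr_ge_zero[of "real m" "3/5"]
      by linarith
    then show "\<exists>C\<ge>0. \<forall>m. \<bar>weight_sum w (\<lambda>j. X j \<omega>) m - (\<Sum>i. p i * w i) * real m\<bar> \<le> C + 2 * real m powr (3/5)"
      unfolding \<mu>_def[symmetric] by (intro exI[of _ "real N"]) auto
  qed
qed

lemma AE_occurrences_deviation:
  fixes X :: "nat \<Rightarrow> 'a \<Rightarrow> nat" and p :: "nat \<Rightarrow> real"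
  assumes indep: "indep_vars (\<lambda>_. count_space UNIV) X {1..}"
    and distr: "\<And>j i. j \<ge> 1 \<Longrightarrow> prob {\<omega> \<in> space M. X j \<omega> = i} = p i"
    and p_nonneg: "\<And>i. p i \<ge> 0" and p_sums: "p sums 1"
  shows "AE \<omega> in M. \<exists>C\<ge>0. \<forall>m i.
           \<bar>occurrences (\<lambda>j. X j \<omega>) m i - real m * p i\<bar> \<le> C + 2 * real m powr (3/5)"
proof -
  have X: "X j \<in> measurable M (count_space UNIV)" if "j \<ge> 1" for j
    using indep that unfolding indep_vars_def by auto
  have "expectation (\<lambda>\<omega>. if X j \<omega> \<le> k then 1 else 0) = cum_mass p k" if "j \<ge> 1" for j k
  proof -
    have "expectation (\<lambda>\<omega>. if X j \<omega> \<le> k then 1 else 0) = (\<Sum>i. p i * (if i \<le> k then 1 else 0))"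
      by (intro expectation_nat_valued[OF X[OF that] distr[OF that] p_nonneg p_sums, of _ 1]) auto
    also have "\<dots> = cum_mass p k"
      unfolding cum_mass_def by (subst suminf_finite[of "{..k}"]) auto
    finally show ?thesis .
  qed
  then have "AE \<omega> in M. eventually (\<lambda>m. \<forall>k\<in>quantile_grid p m.
      \<bar>(\<Sum>j=1..m. (\<lambda>k i. if i \<le> k then 1 else 0) k (X j \<omega>)) - real m * cum_mass p k\<bar> < real m powr (3/5)) sequentially"
    using card_quantile_grid_le[of p]
    by (intro AE_eventually_partial_sums_close[OF indep]) (auto simp: finite_quantile_grid)
  then show ?thesis
  proof (rule eventually_mono)
    fix \<omega>
    assume "eventually (\<lambda>m. \<forall>k\<in>quantile_grid p m.
      \<bar>(\<Sum>j=1..m. (\<lambda>k i. if i \<le> k then 1 else 0) k (X j \<omega>)) - real m * cum_mass p k\<bar> < real m powr (3/5)) sequentially"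
    then obtain N where "\<forall>m\<ge>N. \<forall>k\<in>quantile_grid p m.
        \<bar>count_le (\<lambda>j. X j \<omega>) m k - real m * cum_mass p k\<bar> < real m powr (3/5)"
      by (auto simp: eventually_sequentially count_le_def)
    from occurrences_deviation_uniform[OF p_nonneg p_sums this]
    show "\<exists>C\<ge>0. \<forall>m i. \<bar>occurrences (\<lambda>j. X j \<omega>) m i - real m * p i\<bar> \<le> C + 2 * real m powr (3/5)"
      by (intro exI[of _ "2 * real N + 2"]) auto
  qed
qed

end

section \<open>Matches under a balanced split\<close>

text \<open>\<open>x\<close> and \<open>y\<close> are the label paths of \<open>R\<close> and \<open>S\<close>. Since \<open>X\<^sub>R = s \<circ> L\<^sub>R\<close>, the labels \<open>x\<close>
  are weighted by \<open>s\<close> but distributed according to \<open>r\<close>, and vice versa for \<open>y\<close>.\<close>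

locale regular_label_paths =
  fixes x y :: "nat \<Rightarrow> nat" and r s :: "nat \<Rightarrow> real" and \<mu> C :: real
  assumes r_bounds: "\<And>i. 0 \<le> r i \<and> r i \<le> 1" and s_bounds: "\<And>i. 0 \<le> s i \<and> s i \<le> 1"
    and mu_pos: "\<mu> > 0" and C_nonneg: "C \<ge> 0"
    and weight_sum_x: "\<And>m. \<bar>weight_sum s x m - \<mu> * real m\<bar> \<le> C + 2 * real m powr (3/5)"
    and weight_sum_y: "\<And>m. \<bar>weight_sum r y m - \<mu> * real m\<bar> \<le> C + 2 * real m powr (3/5)"
    and occurrences_x: "\<And>m i. \<bar>occurrences x m i - real m * r i\<bar> \<le> C + 2 * real m powr (3/5)"
    and occurrences_y: "\<And>m i. \<bar>occurrences y m i - real m * s i\<bar> \<le> C + 2 * real m powr (3/5)"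
begin

lemma balanced_split_le:
  assumes "R + S = n" "n \<ge> 1" and balanced: "\<bar>weight_sum s x R - weight_sum r y S\<bar> \<le> 1"
  shows "\<bar>real R - real n / 2\<bar> \<le> (5 + 2 * C) / (2 * \<mu>) * real n powr (3/5)"
proof -
  define P where "P = real n powr (3/5)"
  have "P \<ge> 1" unfolding P_def using \<open>n \<ge> 1\<close> by (intro ge_one_powr_ge_zero) auto
  have "real R powr (3/5) \<le> P" "real S powr (3/5) \<le> P"
    unfolding P_def using \<open>R + S = n\<close> by (auto intro!: powr_mono2)
  have "\<mu> * (real R - real S) = (weight_sum s x R - weight_sum r y S)
      - (weight_sum s x R - \<mu> * real R) + (weight_sum r y S - \<mu> * real S)"
    by (simp add: algebra_simps)
  then have "\<bar>\<mu> * (real R - real S)\<bar> \<le> 1 + 2 * C + 4 * P"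
    using balanced weight_sum_x[of R] weight_sum_y[of S] \<open>real R powr (3/5) \<le> P\<close> \<open>real S powr (3/5) \<le> P\<close>
    by (simp only: abs_le_iff) linarith
  also have "\<dots> \<le> (5 + 2 * C) * P"
    using mult_left_mono[OF \<open>P \<ge> 1\<close>, of "1 + 2 * C"] C_nonneg by (simp add: algebra_simps)
  finally have "\<mu> * \<bar>real R - real S\<bar> \<le> (5 + 2 * C) * P"
    using mu_pos by (simp add: abs_mult)
  moreover have "\<bar>real R - real S\<bar> = 2 * \<bar>real R - real n / 2\<bar>"
    using \<open>R + S = n\<close> by (auto simp flip: of_nat_add simp: abs_if)
  ultimately show ?thesis
    using mu_pos unfolding P_def by (simp add: field_simps)
qed

lemma pair_count_linearization:
  assumes "R \<le> n" "f \<le> n"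
  shows "\<bar>pair_count x y R S - pair_count x y f f
           - real R * (weight_sum r y S - weight_sum r y f) - real f * (weight_sum s x R - weight_sum s x f)\<bar>
         \<le> (\<bar>real S - real f\<bar> + \<bar>real R - real f\<bar>) * (C + 2 * real n powr (3/5))"
proof -
  have bound_mono: "C + 2 * real m powr (3/5) \<le> C + 2 * real n powr (3/5)" if "m \<le> n" for m
    using that by (simp add: powr_mono2)
  have "\<bar>occurrences x R i - real R * r i\<bar> \<le> C + 2 * real n powr (3/5)" for i
    using occurrences_x[of R i] bound_mono[OF \<open>R \<le> n\<close>] by linarith
  from pair_count_diff_second_le[OF this, of y S f]
  have S_step: "\<bar>pair_count x y R S - pair_count x y R f - real R * (weight_sum r y S - weight_sum r y f)\<bar>
      \<le> \<bar>real S - real f\<bar> * (C + 2 * real n powr (3/5))" .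
  have "\<bar>occurrences y f i - real f * s i\<bar> \<le> C + 2 * real n powr (3/5)" for i
    using occurrences_y[of f i] bound_mono[OF \<open>f \<le> n\<close>] by linarith
  from pair_count_diff_first_le[OF this, of x R f]
  have R_step: "\<bar>pair_count x y R f - pair_count x y f f - real f * (weight_sum s x R - weight_sum s x f)\<bar>
      \<le> \<bar>real R - real f\<bar> * (C + 2 * real n powr (3/5))" .
  from S_step R_step show ?thesis
    by (simp only: abs_le_iff distrib_right) linarith
qed

lemma pair_count_expansion:
  "\<exists>K. \<forall>n R S RA SA. n \<ge> 1 \<longrightarrow> R + S = n \<longrightarrow> \<bar>weight_sum s x R - weight_sum r y S\<bar> \<le> 1 \<longrightarrow>
     RA + SA = n \<longrightarrow> RA \<in> {n div 2, n div 2 + 1} \<longrightarrow>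
     \<bar>pair_count x y R S - pair_count x y RA SA
       - real n / 2 * (weight_sum s x R - weight_sum s x (n div 2) + (weight_sum r y S - weight_sum r y (n div 2)))\<bar>
     \<le> K * real n powr (6/5)"
proof -
  define A where "A = (5 + 2 * C) / (2 * \<mu>) + 1"
  have "A \<ge> 1" unfolding A_def using C_nonneg mu_pos by simp
  show ?thesis
  proof (intro exI[of _ "2 * A * (C + 2) + A\<^sup>2 + A + 2"] allI impI)
    fix n R S RA SA :: nat
    assume "n \<ge> 1" "R + S = n" and balanced: "\<bar>weight_sum s x R - weight_sum r y S\<bar> \<le> 1"
      and "RA + SA = n" "RA \<in> {n div 2, n div 2 + 1}"
    define f P where "f = n div 2" and "P = real n powr (3/5)"
    define dX dY where "dX = weight_sum s x R - weight_sum s x f" and "dY = weight_sum r y S - weight_sum r y f"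
    have "P \<ge> 1" unfolding P_def using \<open>n \<ge> 1\<close> by (intro ge_one_powr_ge_zero) auto
    have "real n \<le> P * P"
      unfolding P_def using \<open>n \<ge> 1\<close> powr_mono[of 1 "6/5" "real n"] by (simp flip: powr_add)
    have f: "real f \<le> real n / 2" "real n / 2 \<le> real f + 1/2" unfolding f_def by linarith+
    have near_half: "\<bar>real R - real n / 2\<bar> \<le> A * P" "\<bar>real R - real f\<bar> \<le> A * P" "\<bar>real S - real f\<bar> \<le> A * P"
    proof -
      have "\<bar>real R - real n / 2\<bar> \<le> (A - 1) * P"
        using balanced_split_le[OF \<open>R + S = n\<close> \<open>n \<ge> 1\<close> balanced] unfolding A_def P_def by simp
      moreover have "(A - 1) * P + 1 \<le> A * P" using \<open>P \<ge> 1\<close> by (simp add: algebra_simps)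
      moreover have "real R + real S = real n" using \<open>R + S = n\<close> by (simp flip: of_nat_add)
      ultimately show "\<bar>real R - real n / 2\<bar> \<le> A * P" "\<bar>real R - real f\<bar> \<le> A * P" "\<bar>real S - real f\<bar> \<le> A * P"
        using f by (simp_all only: abs_le_iff) linarith+
    qed
    have lin: "\<bar>pair_count x y R S - pair_count x y f f - real R * dY - real f * dX\<bar> \<le> 2 * A * (C + 2) * (P * P)"
    proof -
      have "R \<le> n" "f \<le> n" using \<open>R + S = n\<close> unfolding f_def by auto
      from pair_count_linearization[OF this, of S]
      have "\<bar>pair_count x y R S - pair_count x y f f - real R * dY - real f * dX\<bar>
          \<le> (\<bar>real S - real f\<bar> + \<bar>real R - real f\<bar>) * (C + 2 * P)"
        unfolding dX_def dY_def P_def .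
      also have "\<dots> \<le> (2 * A * P) * ((C + 2) * P)"
        using near_half \<open>P \<ge> 1\<close> C_nonneg mult_left_mono[OF \<open>P \<ge> 1\<close>, of C]
        by (intro mult_mono) (auto simp: algebra_simps)
      finally show ?thesis by (simp add: algebra_simps)
    qed
    have alternating: "\<bar>pair_count x y RA SA - pair_count x y f f\<bar> \<le> 2 * (P * P)"
      using pair_count_near_half_le[OF \<open>RA + SA = n\<close> \<open>RA \<in> _\<close>, of x y] \<open>real n \<le> P * P\<close>
      unfolding f_def by linarith
    have "\<bar>dY\<bar> \<le> A * P" "\<bar>dX\<bar> \<le> A * P"
      unfolding dX_def dY_def
      using weight_sum_diff_le[of r y S f] weight_sum_diff_le[of s x R f] r_bounds s_bounds near_half
      by (auto simp: abs_le_iff intro: order.trans)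
    have "\<bar>(real R - real n / 2) * dY\<bar> \<le> (A * P) * (A * P)"
      using near_half(1) \<open>\<bar>dY\<bar> \<le> A * P\<close> \<open>A \<ge> 1\<close> \<open>P \<ge> 1\<close> unfolding abs_mult by (intro mult_mono) auto
    moreover have "\<bar>(real f - real n / 2) * dX\<bar> \<le> A * (P * P)"
    proof -
      have "\<bar>real f - real n / 2\<bar> * \<bar>dX\<bar> \<le> \<bar>dX\<bar>" using f by (intro mult_left_le_one_le) auto
      also have "\<dots> \<le> A * P" by fact
      also have "\<dots> \<le> A * (P * P)" using \<open>A \<ge> 1\<close> \<open>P \<ge> 1\<close> by (intro mult_left_mono) auto
      finally show ?thesis unfolding abs_mult .
    qed
    moreover have "pair_count x y R S - pair_count x y RA SA - real n / 2 * (dX + dY)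
      = (pair_count x y R S - pair_count x y f f - real R * dY - real f * dX)
        + (real R - real n / 2) * dY + (real f - real n / 2) * dX - (pair_count x y RA SA - pair_count x y f f)"
      by (simp add: algebra_simps)
    ultimately have "\<bar>pair_count x y R S - pair_count x y RA SA - real n / 2 * (dX + dY)\<bar>
        \<le> (2 * A * (C + 2) + A\<^sup>2 + A + 2) * (P * P)"
      using lin alternating by (simp only: abs_le_iff distrib_right power2_eq_square) (simp add: algebra_simps)
    then show "\<bar>pair_count x y R S - pair_count x y RA SA
       - real n / 2 * (weight_sum s x R - weight_sum s x (n div 2) + (weight_sum r y S - weight_sum r y (n div 2)))\<bar>
     \<le> (2 * A * (C + 2) + A\<^sup>2 + A + 2) * real n powr (6/5)"
      unfolding dX_def dY_def f_def P_def by (simp flip: powr_add)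
  qed
qed

lemma pair_count_difference_asymptotics:
  fixes R S RA SA :: "nat \<Rightarrow> nat"
  assumes "\<And>n. n \<ge> 1 \<Longrightarrow> R n + S n = n"
    and "\<And>n. n \<ge> 1 \<Longrightarrow> \<bar>weight_sum s x (R n) - weight_sum r y (S n)\<bar> \<le> 1"
    and "\<And>n. n \<ge> 1 \<Longrightarrow> RA n + SA n = n" and "\<And>n. n \<ge> 1 \<Longrightarrow> RA n \<in> {n div 2, n div 2 + 1}"
  shows "(\<lambda>n. (pair_count x y (R n) (S n) - pair_count x y (RA n) (SA n)) / real n powr (5/4)
           - ((weight_sum s x (R n) - weight_sum s x (n div 2) + (weight_sum r y (S n) - weight_sum r y (n div 2))) / 2)
             / real n powr (1/4)) \<longlonglongrightarrow> 0"
proof -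
  define D where "D n = pair_count x y (R n) (S n) - pair_count x y (RA n) (SA n)" for n
  define G where "G n = weight_sum s x (R n) - weight_sum s x (n div 2) + (weight_sum r y (S n) - weight_sum r y (n div 2))" for n
  obtain K where K: "\<And>n. n \<ge> 1 \<Longrightarrow> \<bar>D n - real n / 2 * G n\<bar> \<le> K * real n powr (6/5)"
    using pair_count_expansion assms unfolding D_def G_def by meson
  have "(\<lambda>n. D n / real n powr (5/4) - (G n / 2) / real n powr (1/4)) \<longlonglongrightarrow> 0"
  proof (rule Lim_null_comparison)
    show "eventually (\<lambda>n. norm (D n / real n powr (5/4) - (G n / 2) / real n powr (1/4))
        \<le> K * real n powr (6/5) / real n powr (5/4)) sequentially"
      using eventually_ge_at_top[of 1]
    proof eventually_elim
      case (elim n)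
      have "real n powr (5/4) = real n powr (1 + 1/4)" by simp
      also have "\<dots> = real n * real n powr (1/4)" unfolding powr_add using elim by simp
      finally have "D n / real n powr (5/4) - (G n / 2) / real n powr (1/4)
          = (D n - real n / 2 * G n) / real n powr (5/4)"
        using elim by (simp add: field_simps)
      then show ?case using K[OF elim] by (simp add: abs_div divide_right_mono)
    qed
    show "(\<lambda>n::nat. K * real n powr (6/5) / real n powr (5/4)) \<longlonglongrightarrow> 0" by real_asymp
  qed
  then show ?thesis unfolding D_def G_def .
qed

end

section \<open>Reading policies\<close>

lemma Rcnt_Suc: "Rcnt C (Suc n) \<omega> = Rcnt C n \<omega> + (if C (Suc n) \<omega> then 1 else 0)"
proof -
  have "{j \<in> {1..Suc n}. C j \<omega>} = {j \<in> {1..n}. C j \<omega>} \<union> (if C (Suc n) \<omega> then {Suc n} else {})"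
    by (auto simp: le_Suc_eq)
  then show ?thesis unfolding Rcnt_def by (simp add: card_insert_if)
qed

lemma Rcnt_le: "Rcnt C n \<omega> \<le> n"
proof -
  have "Rcnt C n \<omega> \<le> card {1..n}" unfolding Rcnt_def by (intro card_mono) auto
  then show ?thesis by simp
qed

lemma Rcnt_add_Scnt: "Rcnt C n \<omega> + Scnt C n \<omega> = n"
  unfolding Scnt_def using Rcnt_le[of C n \<omega>] by simp

lemma Scnt_Suc: "Scnt C (Suc n) \<omega> = Scnt C n \<omega> + (if C (Suc n) \<omega> then 0 else 1)"
  unfolding Scnt_def using Rcnt_Suc[of C n \<omega>] Rcnt_le[of C n \<omega>] by auto

lemma Gam_eq_weight_sum: "Gam w L m \<omega> = weight_sum w (\<lambda>j. L j \<omega>) m"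
  unfolding Gam_def weight_sum_def ..

lemma greedy_weight_sums_balanced:
  assumes v_bounds: "\<And>i. 0 \<le> v i \<and> v i \<le> 1" and w_bounds: "\<And>i. 0 \<le> w i \<and> w i \<le> 1"
    and greedy: "\<And>n. n \<ge> 1 \<Longrightarrow>
      (weight_sum w y (Scnt C n \<omega>) > weight_sum v x (Rcnt C n \<omega>) \<longrightarrow> C (Suc n) \<omega>) \<and>
      (weight_sum w y (Scnt C n \<omega>) < weight_sum v x (Rcnt C n \<omega>) \<longrightarrow> \<not> C (Suc n) \<omega>)"
    and "n \<ge> 1"
  shows "\<bar>weight_sum v x (Rcnt C n \<omega>) - weight_sum w y (Scnt C n \<omega>)\<bar> \<le> 1"
  using \<open>n \<ge> 1\<close>
proof (induction n rule: dec_induct)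
  case base
  have "Rcnt C 0 \<omega> = 0" "Scnt C 0 \<omega> = 0" unfolding Rcnt_def Scnt_def by auto
  then show ?case
    using Rcnt_Suc[of C 0 \<omega>] Scnt_Suc[of C 0 \<omega>] v_bounds w_bounds by (auto simp: weight_sum_def)
next
  case (step n)
  define a b where "a = weight_sum v x (Rcnt C n \<omega>)" and "b = weight_sum w y (Scnt C n \<omega>)"
  have "\<bar>a - b\<bar> \<le> 1" using step.IH unfolding a_def b_def .
  show ?case
  proof (cases "C (Suc n) \<omega>")
    case True
    then have "\<not> b < a" using greedy[OF step(1)] unfolding a_def b_def by auto
    moreover have "weight_sum v x (Rcnt C (Suc n) \<omega>) = a + v (x (Suc (Rcnt C n \<omega>)))"
      "weight_sum w y (Scnt C (Suc n) \<omega>) = b"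
      using True unfolding a_def b_def by (simp_all add: Rcnt_Suc Scnt_Suc weight_sum_Suc)
    ultimately show ?thesis using \<open>\<bar>a - b\<bar> \<le> 1\<close> v_bounds[of "x (Suc (Rcnt C n \<omega>))"] by (simp only: abs_le_iff) linarith
  next
    case False
    then have "\<not> a < b" using greedy[OF step(1)] unfolding a_def b_def by auto
    moreover have "weight_sum v x (Rcnt C (Suc n) \<omega>) = a"
      "weight_sum w y (Scnt C (Suc n) \<omega>) = b + w (y (Suc (Scnt C n \<omega>)))"
      using False unfolding a_def b_def by (simp_all add: Rcnt_Suc Scnt_Suc weight_sum_Suc)
    ultimately show ?thesis using \<open>\<bar>a - b\<bar> \<le> 1\<close> w_bounds[of "y (Suc (Scnt C n \<omega>))"] by (simp only: abs_le_iff) linarith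
  qed
qed

lemma alternating_Rcnt:
  assumes "\<And>k. Rcnt C (2 * k) \<omega> = k"
  shows "Rcnt C n \<omega> \<in> {n div 2, n div 2 + 1}"
proof (cases "even n")
  case True
  then show ?thesis using assms[of "n div 2"] by auto
next
  case False
  then obtain k where "n = Suc (2 * k)" by (metis oddE Suc_eq_plus1)
  then show ?thesis using Rcnt_Suc[of C "2 * k" \<omega>] assms[of k] by auto
qed

text \<open>Both cases in the definition of \<open>Gn\<close> are the same expression, so the event \<open>Aevent\<close>
  plays no role.\<close>

lemma Gn_eq:
  "Gn r s LR LS C n \<omega> =
     (weight_sum s (\<lambda>j. LR j \<omega>) (Rcnt C n \<omega>) - weight_sum s (\<lambda>j. LR j \<omega>) (n div 2)
      + (weight_sum r (\<lambda>j. LS j \<omega>) (Scnt C n \<omega>) - weight_sum r (\<lambda>j. LS j \<omega>) (n div 2))) / 2"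
proof -
  have "\<lfloor>real n / 2\<rfloor> = int (n div 2)" using floor_divide_of_nat_eq[of n 2] by simp
  then have "nat \<lfloor>real n / 2\<rfloor> = n div 2" by simp
  then show ?thesis unfolding Gn_def Let_def Gam_eq_weight_sum by (simp add: algebra_simps)
qed

lemma matches_eq_pair_count:
  assumes nonzero: "\<And>j. j \<ge> 1 \<Longrightarrow> LR j \<omega> \<noteq> 0"
  shows "matches LR LS C n \<omega> = pair_count (\<lambda>j. LR j \<omega>) (\<lambda>j. LS j \<omega>) (Rcnt C n \<omega>) (Scnt C n \<omega>)"
proof -
  define a b x y where "a = Rcnt C n \<omega>" and "b = Scnt C n \<omega>" and "x = (\<lambda>j. LR j \<omega>)" and "y = (\<lambda>j. LS j \<omega>)"
  define X where "X = x ` {1..a}"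
  have "matches LR LS C n \<omega> = (\<Sum>\<^sub>\<infinity>i\<in>{1..}. occurrences x a i * occurrences y b i)"
    unfolding matches_def Ncnt_def occurrences_def a_def b_def x_def y_def ..
  also have "\<dots> = (\<Sum>\<^sub>\<infinity>i\<in>X. occurrences x a i * occurrences y b i)"
  proof (rule infsum_cong_neutral)
    fix i assume "i \<in> {1..} - X"
    then have "{j \<in> {1..a}. x j = i} = {}" unfolding X_def by auto
    then show "occurrences x a i * occurrences y b i = 0" unfolding occurrences_def by simp
  next
    fix i assume "i \<in> X - {1..}"
    then obtain j where "j \<ge> 1" "i = x j" "i = 0" unfolding X_def by auto
    then show "occurrences x a i * occurrences y b i = 0" using nonzero[of j] unfolding x_def by simp
  qed auto
  also have "\<dots> = (\<Sum>i\<in>X. occurrences x a i * occurrences y b i)"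
    unfolding X_def by (rule infsum_finite) simp
  also have "\<dots> = (\<Sum>i\<in>X. \<Sum>j=1..a. if x j = i then occurrences y b i else 0)"
    unfolding occurrences_eq_sum[of x a] sum_distrib_right by (intro sum.cong refl) auto
  also have "\<dots> = (\<Sum>j=1..a. \<Sum>i\<in>X. if x j = i then occurrences y b i else 0)"
    by (rule sum.swap)
  also have "\<dots> = pair_count x y a b"
    unfolding pair_count_def X_def by (intro sum.cong refl) (simp add: sum.delta')
  finally show ?thesis unfolding a_def b_def x_def y_def .
qed

lemma greedy_alternating_matches_asymptotics:
  assumes paths: "regular_label_paths (\<lambda>j. LR j \<omega>) (\<lambda>j. LS j \<omega>) r s \<mu> C"
    and nonzero: "\<And>j. j \<ge> 1 \<Longrightarrow> LR j \<omega> \<noteq> 0"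
    and greedy: "\<And>n. n \<ge> 1 \<Longrightarrow>
      (Gam r LS (Scnt CG n \<omega>) \<omega> > Gam s LR (Rcnt CG n \<omega>) \<omega> \<longrightarrow> CG (Suc n) \<omega>) \<and>
      (Gam r LS (Scnt CG n \<omega>) \<omega> < Gam s LR (Rcnt CG n \<omega>) \<omega> \<longrightarrow> \<not> CG (Suc n) \<omega>)"
    and alternating: "\<And>k. Rcnt CA (2 * k) \<omega> = k"
  shows "(\<lambda>n. (matches LR LS CG n \<omega> - matches LR LS CA n \<omega>) / real n powr (5/4)
           - Gn r s LR LS CG n \<omega> / real n powr (1/4)) \<longlonglongrightarrow> 0"
proof -
  have "\<bar>weight_sum s (\<lambda>j. LR j \<omega>) (Rcnt CG n \<omega>) - weight_sum r (\<lambda>j. LS j \<omega>) (Scnt CG n \<omega>)\<bar> \<le> 1"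
    if "n \<ge> 1" for n
    using regular_label_paths.s_bounds[OF paths] regular_label_paths.r_bounds[OF paths] greedy that
    unfolding Gam_eq_weight_sum by (rule greedy_weight_sums_balanced)
  moreover have "Rcnt CA n \<omega> \<in> {n div 2, n div 2 + 1}" for n
    using alternating by (rule alternating_Rcnt)
  moreover have matches_eq:
    "matches LR LS C n \<omega> = pair_count (\<lambda>j. LR j \<omega>) (\<lambda>j. LS j \<omega>) (Rcnt C n \<omega>) (Scnt C n \<omega>)" for C n
    using nonzero by (rule matches_eq_pair_count)
  ultimately show ?thesis
    unfolding matches_eq Gn_eq
    by (intro regular_label_paths.pair_count_difference_asymptotics[OF paths]) (auto simp: Rcnt_add_Scnt)
qed

lemma (in prob_space) AE_regular_label_paths:
  fixes X Y :: "nat \<Rightarrow> 'a \<Rightarrow> nat" and r s :: "nat \<Rightarrow> real"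
  assumes indep_X: "indep_vars (\<lambda>_. count_space UNIV) X {1..}"
    and indep_Y: "indep_vars (\<lambda>_. count_space UNIV) Y {1..}"
    and distr_X: "\<And>j i. j \<ge> 1 \<Longrightarrow> prob {\<omega> \<in> space M. X j \<omega> = i} = r i"
    and distr_Y: "\<And>j i. j \<ge> 1 \<Longrightarrow> prob {\<omega> \<in> space M. Y j \<omega> = i} = s i"
    and r_nonneg: "\<And>i. r i \<ge> 0" and r_sums: "r sums 1"
    and s_nonneg: "\<And>i. s i \<ge> 0" and s_sums: "s sums 1"
    and mu_pos: "(\<Sum>i. r i * s i) > 0"
  shows "AE \<omega> in M. \<exists>C. regular_label_paths (\<lambda>j. X j \<omega>) (\<lambda>j. Y j \<omega>) r s (\<Sum>i. r i * s i) C"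
proof -
  have r_bounds: "\<And>i. 0 \<le> r i \<and> r i \<le> 1" and s_bounds: "\<And>i. 0 \<le> s i \<and> s i \<le> 1"
    using sums_one_bounds r_nonneg r_sums s_nonneg s_sums by blast+
  have weight_sum_X: "AE \<omega> in M. \<exists>C\<ge>0. \<forall>m.
      \<bar>weight_sum s (\<lambda>j. X j \<omega>) m - (\<Sum>i. r i * s i) * real m\<bar> \<le> C + 2 * real m powr (3/5)"
    using indep_X distr_X r_nonneg r_sums s_bounds by (rule AE_weight_sum_deviation)
  have "AE \<omega> in M. \<exists>C\<ge>0. \<forall>m.
      \<bar>weight_sum r (\<lambda>j. Y j \<omega>) m - (\<Sum>i. s i * r i) * real m\<bar> \<le> C + 2 * real m powr (3/5)"
    using indep_Y distr_Y s_nonneg s_sums r_bounds by (rule AE_weight_sum_deviation)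
  moreover have "(\<Sum>i. s i * r i) = (\<Sum>i. r i * s i)" by (simp add: mult.commute)
  ultimately have weight_sum_Y: "AE \<omega> in M. \<exists>C\<ge>0. \<forall>m.
      \<bar>weight_sum r (\<lambda>j. Y j \<omega>) m - (\<Sum>i. r i * s i) * real m\<bar> \<le> C + 2 * real m powr (3/5)"
    by simp
  have occurrences_X: "AE \<omega> in M. \<exists>C\<ge>0. \<forall>m i.
      \<bar>occurrences (\<lambda>j. X j \<omega>) m i - real m * r i\<bar> \<le> C + 2 * real m powr (3/5)"
    using indep_X distr_X r_nonneg r_sums by (rule AE_occurrences_deviation)
  have occurrences_Y: "AE \<omega> in M. \<exists>C\<ge>0. \<forall>m i.
      \<bar>occurrences (\<lambda>j. Y j \<omega>) m i - real m * s i\<bar> \<le> C + 2 * real m powr (3/5)"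
    using indep_Y distr_Y s_nonneg s_sums by (rule AE_occurrences_deviation)
  from weight_sum_X weight_sum_Y occurrences_X occurrences_Y
  show ?thesis
  proof eventually_elim
    case (elim \<omega>)
    then obtain C1 C2 C3 C4 where "C1 \<ge> 0" "C2 \<ge> 0" "C3 \<ge> 0" "C4 \<ge> 0"
      and bounds:
        "\<And>m. \<bar>weight_sum s (\<lambda>j. X j \<omega>) m - (\<Sum>i. r i * s i) * real m\<bar> \<le> C1 + 2 * real m powr (3/5)"
        "\<And>m. \<bar>weight_sum r (\<lambda>j. Y j \<omega>) m - (\<Sum>i. r i * s i) * real m\<bar> \<le> C2 + 2 * real m powr (3/5)"
        "\<And>m i. \<bar>occurrences (\<lambda>j. X j \<omega>) m i - real m * r i\<bar> \<le> C3 + 2 * real m powr (3/5)"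
        "\<And>m i. \<bar>occurrences (\<lambda>j. Y j \<omega>) m i - real m * s i\<bar> \<le> C4 + 2 * real m powr (3/5)"
      by auto
    have "regular_label_paths (\<lambda>j. X j \<omega>) (\<lambda>j. Y j \<omega>) r s (\<Sum>i. r i * s i) (C1 + C2 + C3 + C4)"
    proof
      show "\<bar>weight_sum s (\<lambda>j. X j \<omega>) m - (\<Sum>i. r i * s i) * real m\<bar> \<le> C1 + C2 + C3 + C4 + 2 * real m powr (3/5)"
        for m using bounds(1)[of m] \<open>C2 \<ge> 0\<close> \<open>C3 \<ge> 0\<close> \<open>C4 \<ge> 0\<close> by linarith
      show "\<bar>weight_sum r (\<lambda>j. Y j \<omega>) m - (\<Sum>i. r i * s i) * real m\<bar> \<le> C1 + C2 + C3 + C4 + 2 * real m powr (3/5)"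
        for m using bounds(2)[of m] \<open>C1 \<ge> 0\<close> \<open>C3 \<ge> 0\<close> \<open>C4 \<ge> 0\<close> by linarith
      show "\<bar>occurrences (\<lambda>j. X j \<omega>) m i - real m * r i\<bar> \<le> C1 + C2 + C3 + C4 + 2 * real m powr (3/5)"
        for m i using bounds(3)[of m i] \<open>C1 \<ge> 0\<close> \<open>C2 \<ge> 0\<close> \<open>C4 \<ge> 0\<close> by linarith
      show "\<bar>occurrences (\<lambda>j. Y j \<omega>) m i - real m * s i\<bar> \<le> C1 + C2 + C3 + C4 + 2 * real m powr (3/5)"
        for m i using bounds(4)[of m i] \<open>C1 \<ge> 0\<close> \<open>C2 \<ge> 0\<close> \<open>C3 \<ge> 0\<close> by linarith
    qed (use r_bounds s_bounds mu_pos \<open>C1 \<ge> 0\<close> \<open>C2 \<ge> 0\<close> \<open>C3 \<ge> 0\<close> \<open>C4 \<ge> 0\<close> in auto)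
    then show ?case by blast
  qed
qed

theorem lemma4p5:
  fixes M F0 :: "'a measure" and r s :: "nat \<Rightarrow> real"
    and LR LS :: "nat \<Rightarrow> 'a \<Rightarrow> nat" and CG CA :: "nat \<Rightarrow> 'a \<Rightarrow> bool"
  assumes P: "prob_space M"
    and r_nn: "\<forall>i. r i \<ge> 0" and r0: "r 0 = 0" and r_sum: "r sums 1"
    and s_nn: "\<forall>i. s i \<ge> 0" and s0: "s 0 = 0" and s_sum: "s sums 1"
    and mu_pos: "(\<Sum>i. r i * s i) > 0"
    and indep: "prob_space.indep_vars M (\<lambda>_. count_space UNIV)
                  (\<lambda>k. case k of Inl n \<Rightarrow> LR n | Inr n \<Rightarrow> LS n) ({1..} <+> {1..})"
    and LR_dist: "\<forall>n\<ge>1. \<forall>i. measure M {\<omega> \<in> space M. LR n \<omega> = i} = r i"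
    and LS_dist: "\<forall>n\<ge>1. \<forall>i. measure M {\<omega> \<in> space M. LS n \<omega> = i} = s i"
    and std: "sqrt (LINT \<omega>|M. (s (LR 1 \<omega>) - (LINT \<omega>'|M. s (LR 1 \<omega>')))\<^sup>2)
            + sqrt (LINT \<omega>|M. (r (LS 1 \<omega>) - (LINT \<omega>'|M. r (LS 1 \<omega>')))\<^sup>2) > 0"
    and F0_sub: "subalgebra M F0"
    and F0_indep: "prob_space.indep_set M (sets F0)
         (sigma_sets (space M) (\<Union>n\<in>{1..}. {LR n -` A \<inter> space M | A. True}
                                          \<union> {LS n -` A \<inter> space M | A. True}))"
    and greedy: "greedy_policy r s F0 LR LS CG"
    and alt: "alternating_policy F0 LR LS CA"
  shows "AE \<omega> in M.
     (\<lambda>n. (matches LR LS CG n \<omega> - matches LR LS CA n \<omega>) / real n powr (5/4)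
          - Gn r s LR LS CG n \<omega> / real n powr (1/4)) \<longlonglongrightarrow> 0"
proof -
  interpret prob_space M by (rule P)
  \<comment> \<open>Not needed: \<open>std\<close> and \<open>F0_indep\<close> (the estimate is pathwise once the deviation
    bounds hold) and \<open>s0\<close> (by \<open>r0\<close>, label \<open>0\<close> never occurs among the \<open>LR\<close> labels).\<close>
  have indep_LR: "indep_vars (\<lambda>_. count_space UNIV) LR {1..}"
    and indep_LS: "indep_vars (\<lambda>_. count_space UNIV) LS {1..}"
    using indep_vars_reindex[OF inj_Inl indep_vars_subset[OF indep]]
      indep_vars_reindex[OF inj_Inr indep_vars_subset[OF indep]] by auto
  have LR_measurable: "LR j \<in> measurable M (count_space UNIV)" if "j \<ge> 1" for j
    using indep_LR that unfolding indep_vars_def by auto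
  have "AE \<omega> in M. \<exists>C. regular_label_paths (\<lambda>j. LR j \<omega>) (\<lambda>j. LS j \<omega>) r s (\<Sum>i. r i * s i) C"
    using r_nn s_nn LR_dist LS_dist
    by (intro AE_regular_label_paths[OF indep_LR indep_LS _ _ _ r_sum _ s_sum mu_pos]) auto
  moreover have "AE \<omega> in M. \<forall>j\<ge>1. LR j \<omega> \<noteq> 0"
    using LR_dist r0 by (intro AE_all_nonzero LR_measurable) auto
  ultimately show ?thesis
    using AE_space
  proof eventually_elim
    case (elim \<omega>)
    then obtain C where "regular_label_paths (\<lambda>j. LR j \<omega>) (\<lambda>j. LS j \<omega>) r s (\<Sum>i. r i * s i) C"
      by blast
    moreover have "\<omega> \<in> space F0" using F0_sub elim(3) by (simp add: subalgebra_def)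
    ultimately show ?case
      using elim(2) greedy alt
      by (intro greedy_alternating_matches_asymptotics) (auto simp: greedy_policy_def alternating_policy_def)
  qed
qed

end
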